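(* For all integers $M,N,p\ge1$, $$\delta_p(M,N)=\sum_{s=1}^{M}\sum_{t=1}^{N}\delta_p^{st}(M,N).$$
   Context: $P(p)$ is the set of partitions of $\{1,\dots,p\}$, $|\pi|$ the number of blocks, and $S_{ps}=\#\{\pi\in P(p):|\pi|=s\}$ (Stirling numbers). For $\pi,\sigma\in P(p)$, write $\pi\triangleright\sigma$ if for every block $\beta$ of $\pi$ and every block $\gamma$ of $\sigma$, $\#\{x:x\in\beta,x\in\gamma\}=\#\{x:x\in\beta,x+1\in\gamma\}$, indices modulo $p$. For $1\le s,t\le p$ let $\varepsilon_p(s,t)=\frac{\#\{(\pi,\sigma)\in P(p)^2:\pi\triangleright\sigma,|\pi|=s,|\sigma|=t\}}{S_{ps}S_{pt}}$ (the probability that $\pi\triangleright\sigma$ for uniformly random $\pi,\sigma$ with $s$ and $t$ blocks). Set $\delta_p^{st}(M,N)=\frac{M!}{(M-s)!}\cdot\frac{S_{ps}}{M^p}\cdot\frac{N!}{(N-t)!}\cdot\frac{S_{pt}}{N^p}\cdot\varepsilon_p(s,t)$ for $1\le s\le\min(M,p)$, $1\le t\le\min(N,p)$, and $\delta_p^{st}(M,N)=0$ otherwise. Also $\delta_p(M,N)=\frac{1}{(MN)^p}\#\{(a,b)\in\mathbb Z_M^p\times\mathbb Z_N^p:\{(a_y,b_y)\}_{y=1}^p=\{(a_y,b_{y+1})\}_{y=1}^p\text{ as multisets}\}$, with $b_{p+1}=b_1$. *)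

theory Defs
  imports Complex_Main "HOL-Library.Disjoint_Sets" "HOL-Library.Multiset" "HOL-Library.FuncSet"
begin

definition set_partitions :: "nat \<Rightarrow> nat set set set" where
  "set_partitions p = {P. partition_on {1..p} P}"

text \<open>Cyclic successor on {1,...,p}: y+1, with p+1 identified with 1.\<close>
definition cyc_succ :: "nat \<Rightarrow> nat \<Rightarrow> nat" where
  "cyc_succ p y = y mod p + 1"

definition part_rel :: "nat \<Rightarrow> nat set set \<Rightarrow> nat set set \<Rightarrow> bool" where
  "part_rel p \<pi> \<sigma> \<longleftrightarrow> (\<forall>\<beta>\<in>\<pi>. \<forall>\<gamma>\<in>\<sigma>.
      card {x. x \<in> \<beta> \<and> x \<in> \<gamma>} = card {x. x \<in> \<beta> \<and> cyc_succ p x \<in> \<gamma>})"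

definition S_count :: "nat \<Rightarrow> nat \<Rightarrow> nat" where
  "S_count p s = card {\<pi> \<in> set_partitions p. card \<pi> = s}"

definition eps :: "nat \<Rightarrow> nat \<Rightarrow> nat \<Rightarrow> real" where
  "eps p s t = real (card {(\<pi>, \<sigma>). \<pi> \<in> set_partitions p \<and> \<sigma> \<in> set_partitions p \<and>
        part_rel p \<pi> \<sigma> \<and> card \<pi> = s \<and> card \<sigma> = t})
     / (real (S_count p s) * real (S_count p t))"

definition delta_st :: "nat \<Rightarrow> nat \<Rightarrow> nat \<Rightarrow> nat \<Rightarrow> nat \<Rightarrow> real" where
  "delta_st p M N s t =
    (if 1 \<le> s \<and> s \<le> min M p \<and> 1 \<le> t \<and> t \<le> min N p then
       (fact M / fact (M - s)) * (real (S_count p s) / real M ^ p)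
     * (fact N / fact (N - t)) * (real (S_count p t) / real N ^ p) * eps p s t
     else 0)"

text \<open>delta_p(M,N): tuples a in Z_M^p, b in Z_N^p indexed by {1..p}, represented as
  extensional functions {1..p} -> {0..<M} resp. {0..<N}.\<close>
definition delta :: "nat \<Rightarrow> nat \<Rightarrow> nat \<Rightarrow> real" where
  "delta p M N = real (card {(a, b). a \<in> {1..p} \<rightarrow>\<^sub>E {..<M} \<and> b \<in> {1..p} \<rightarrow>\<^sub>E {..<N} \<and>
        image_mset (\<lambda>y. (a y, b y)) (mset_set {1..p})
      = image_mset (\<lambda>y. (a y, b (cyc_succ p y))) (mset_set {1..p})})
     / (real M * real N) ^ p"

end

theory Submission
  imports Defs
begin

text \<open>Whether a pair of tuples \<open>(a, b)\<close> satisfies the multiset condition depends only on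
  their kernel partitions \<open>\<pi> = ker a\<close> and \<open>\<sigma> = ker b\<close> (the level sets of the tuples): the
  condition says that every value pair \<open>(u, v)\<close> is hit equally often by \<open>(a\<^sub>y, b\<^sub>y)\<close> and
  \<open>(a\<^sub>y, b\<^sub>y\<^sub>+\<^sub>1)\<close>, which is exactly \<open>\<pi> \<triangleright> \<sigma>\<close>. A tuple in \<open>\<int>\<^sub>M\<^sup>p\<close> with kernel \<open>\<pi>\<close> is an injective
  colouring of the blocks of \<open>\<pi>\<close>, so there are \<open>M!/(M-|\<pi>|)!\<close> of them. Hence
  \<open>(MN)\<^sup>p \<delta>\<^sub>p(M,N)\<close> is the sum of \<open>M!/(M-|\<pi>|)! \<cdot> N!/(N-|\<sigma>|)!\<close> over all related pairs, and
  grouping these pairs by their block numbers \<open>s, t\<close> (there are \<open>S\<^sub>p\<^sub>s S\<^sub>p\<^sub>t \<epsilon>\<^sub>p(s,t)\<close> of them)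
  gives the formula.\<close>

lemma partition_on_card_le:
  assumes "finite I" "partition_on I P"
  shows "card P \<le> card I"
proof -
  have fin: "finite \<beta>" if "\<beta> \<in> P" for \<beta>
    using assms(1) partition_onD1[OF assms(2)] that by (meson Union_upper finite_subset)
  have "card P = (\<Sum>\<beta>\<in>P. 1)" by simp
  also have "\<dots> \<le> (\<Sum>\<beta>\<in>P. card \<beta>)"
  proof (rule sum_mono)
    fix \<beta> assume "\<beta> \<in> P"
    then show "1 \<le> card \<beta>"
      using fin partition_onD3[OF assms(2)] by (metis One_nat_def Suc_leI card_gt_0_iff)
  qed
  also have "\<dots> = card I" using product_partition[OF assms(2) fin] by simp
  finally show ?thesis .
qed

lemma partition_on_card_pos:
  "finite I \<Longrightarrow> I \<noteq> {} \<Longrightarrow> partition_on I P \<Longrightarrow> 0 < card P"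
  using finite_elements partition_onD1 by (auto simp: card_gt_0_iff)

definition kernel_partition :: "'a set \<Rightarrow> ('a \<Rightarrow> 'b) \<Rightarrow> 'a set set" where
  "kernel_partition I a = (\<lambda>y. {x\<in>I. a x = a y}) ` I"

lemma partition_on_kernel_partition: "partition_on I (kernel_partition I a)"
  by (rule partition_onI) (auto simp: kernel_partition_def disjnt_def)

lemma kernel_partition_block:
  "\<beta> \<in> kernel_partition I a \<Longrightarrow> x \<in> \<beta> \<Longrightarrow> \<beta> = {y\<in>I. a y = a x}"
  unfolding kernel_partition_def by auto

lemma kernel_partition_block_eq_iff:
  assumes "\<beta> \<in> kernel_partition I a" "\<gamma> \<in> kernel_partition I a" "x \<in> \<beta>" "y \<in> \<gamma>"
  shows "\<beta> = \<gamma> \<longleftrightarrow> a x = a y"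
  using kernel_partition_block[OF assms(1,3)] kernel_partition_block[OF assms(2,4)] assms(3,4)
  by auto

lemma kernel_partition_cong:
  "(\<And>x. x \<in> I \<Longrightarrow> a x = a' x) \<Longrightarrow> kernel_partition I a = kernel_partition I a'"
  unfolding kernel_partition_def by (intro image_cong) auto

definition block_of :: "'a set set \<Rightarrow> 'a \<Rightarrow> 'a set" where
  "block_of P y = (THE \<beta>. \<beta> \<in> P \<and> y \<in> \<beta>)"

lemma block_of_eq:
  assumes P: "partition_on I P" and "\<beta> \<in> P" "y \<in> \<beta>"
  shows "block_of P y = \<beta>"
  unfolding block_of_def
  using assms partition_onD2[OF P] by (intro the_equality) (auto simp: disjoint_def)

lemma block_of_mem:
  assumes P: "partition_on I P" and "y \<in> I"
  shows "block_of P y \<in> P" "y \<in> block_of P y"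
proof -
  obtain \<beta> where "\<beta> \<in> P" "y \<in> \<beta>" using partition_onD1[OF P] \<open>y \<in> I\<close> by blast
  with block_of_eq[OF P this] show "block_of P y \<in> P" "y \<in> block_of P y" by simp_all
qed

lemma block_of_surj:
  assumes P: "partition_on I P" and "\<beta> \<in> P"
  shows "\<exists>y\<in>I. block_of P y = \<beta>"
proof -
  obtain y where "y \<in> \<beta>" using \<open>\<beta> \<in> P\<close> partition_onD3[OF P] by (metis ex_in_conv)
  then show ?thesis using \<open>\<beta> \<in> P\<close> partition_onD1[OF P] block_of_eq[OF P] by blast
qed

lemma kernel_partition_comp_block_of:
  assumes P: "partition_on I P" and inj: "inj_on g P"
  shows "kernel_partition I (g \<circ> block_of P) = P"
proof -
  have sub: "\<beta> \<subseteq> I" if "\<beta> \<in> P" for \<beta> using partition_onD1[OF P] that by blast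
  have fibre: "{x\<in>I. g (block_of P x) = g (block_of P y)} = block_of P y" if "y \<in> I" for y
  proof (intro equalityI subsetI)
    fix x assume x: "x \<in> {x\<in>I. g (block_of P x) = g (block_of P y)}"
    then have "block_of P x = block_of P y"
      using inj_onD[OF inj] block_of_mem[OF P] \<open>y \<in> I\<close> by simp
    then show "x \<in> block_of P y" using x block_of_mem(2)[OF P] by force
  next
    fix x assume "x \<in> block_of P y"
    moreover have "block_of P y \<in> P" using block_of_mem(1)[OF P \<open>y \<in> I\<close>] .
    ultimately have "x \<in> I" "block_of P x = block_of P y"
      using sub block_of_eq[OF P] by blast+
    then show "x \<in> {x\<in>I. g (block_of P x) = g (block_of P y)}" by simp
  qed
  have "kernel_partition I (g \<circ> block_of P) = block_of P ` I"
    unfolding kernel_partition_def using fibre by simp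
  also have "\<dots> = P"
  proof (intro equalityI subsetI)
    fix \<beta> assume "\<beta> \<in> P"
    then show "\<beta> \<in> block_of P ` I" using block_of_surj[OF P] by (metis image_eqI)
  qed (use block_of_mem(1)[OF P] in auto)
  finally show ?thesis .
qed

lemma kernel_partition_factors_through_blocks:
  assumes P: "partition_on I P" and ker: "kernel_partition I a = P"
  shows "\<exists>g. inj_on g P \<and> (\<forall>y\<in>I. a y = g (block_of P y))"
proof -
  define g where "g \<beta> = a (SOME x. x \<in> \<beta>)" for \<beta>
  have g: "g \<beta> = a x" if "\<beta> \<in> P" "x \<in> \<beta>" for \<beta> x
  proof -
    have "(SOME x. x \<in> \<beta>) \<in> \<beta>" using \<open>x \<in> \<beta>\<close> by (rule someI)
    then show ?thesis
      using kernel_partition_block_eq_iff[of \<beta> I a \<beta> "SOME x. x \<in> \<beta>" x] ker that by (simp add: g_def)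
  qed
  have "inj_on g P"
  proof (rule inj_onI)
    fix \<beta> \<gamma> assume "\<beta> \<in> P" "\<gamma> \<in> P" "g \<beta> = g \<gamma>"
    moreover obtain x y where "x \<in> \<beta>" "y \<in> \<gamma>"
      using \<open>\<beta> \<in> P\<close> \<open>\<gamma> \<in> P\<close> partition_onD3[OF P] by (metis ex_in_conv)
    ultimately show "\<beta> = \<gamma>"
      using kernel_partition_block_eq_iff[of \<beta> I a \<gamma> x y] ker g by simp
  qed
  moreover have "\<forall>y\<in>I. a y = g (block_of P y)"
    using g[OF block_of_mem[OF P]] by simp
  ultimately show ?thesis by blast
qed

lemma card_kernel_partition_eq:
  fixes C :: "'b set"
  assumes P: "partition_on I P"
  shows "card {a \<in> I \<rightarrow>\<^sub>E C. kernel_partition I a = P} = card {g \<in> P \<rightarrow>\<^sub>E C. inj_on g P}"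
proof -
  define \<Psi> where "\<Psi> g = restrict (g \<circ> block_of P) I" for g :: "'a set \<Rightarrow> 'b"
  have "inj_on \<Psi> {g \<in> P \<rightarrow>\<^sub>E C. inj_on g P}"
  proof (rule inj_onI)
    fix g g' assume "g \<in> {g \<in> P \<rightarrow>\<^sub>E C. inj_on g P}" "g' \<in> {g \<in> P \<rightarrow>\<^sub>E C. inj_on g P}"
      and eq: "\<Psi> g = \<Psi> g'"
    then have "g \<in> P \<rightarrow>\<^sub>E C" "g' \<in> P \<rightarrow>\<^sub>E C" by simp_all
    moreover have "g \<beta> = g' \<beta>" if \<beta>: "\<beta> \<in> P" for \<beta>
    proof -
      obtain y where "y \<in> I" "block_of P y = \<beta>" using block_of_surj[OF P \<beta>] by blast
      then show ?thesis using fun_cong[OF eq, of y] by (simp add: \<Psi>_def)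
    qed
    ultimately show "g = g'" by (rule PiE_ext)
  qed
  moreover have "\<Psi> ` {g \<in> P \<rightarrow>\<^sub>E C. inj_on g P} = {a \<in> I \<rightarrow>\<^sub>E C. kernel_partition I a = P}"
  proof (intro equalityI subsetI)
    fix a assume "a \<in> \<Psi> ` {g \<in> P \<rightarrow>\<^sub>E C. inj_on g P}"
    then obtain g where g: "g \<in> P \<rightarrow>\<^sub>E C" "inj_on g P" and a: "a = \<Psi> g" by blast
    have "kernel_partition I a = kernel_partition I (g \<circ> block_of P)"
      unfolding a \<Psi>_def by (rule kernel_partition_cong) simp
    then have "kernel_partition I a = P"
      using kernel_partition_comp_block_of[OF P g(2)] by simp
    moreover have "a \<in> I \<rightarrow>\<^sub>E C"
      using g(1) block_of_mem(1)[OF P] by (auto simp: a \<Psi>_def)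
    ultimately show "a \<in> {a \<in> I \<rightarrow>\<^sub>E C. kernel_partition I a = P}" by simp
  next
    fix a assume "a \<in> {a \<in> I \<rightarrow>\<^sub>E C. kernel_partition I a = P}"
    then have a: "a \<in> I \<rightarrow>\<^sub>E C" and ker: "kernel_partition I a = P" by simp_all
    obtain g where inj: "inj_on g P" and factor: "\<forall>y\<in>I. a y = g (block_of P y)"
      using kernel_partition_factors_through_blocks[OF P ker] by blast
    have "g \<beta> \<in> C" if \<beta>: "\<beta> \<in> P" for \<beta>
    proof -
      obtain y where "y \<in> I" "block_of P y = \<beta>" using block_of_surj[OF P \<beta>] by blast
      then show ?thesis using a factor by force
    qed
    then have "restrict g P \<in> P \<rightarrow>\<^sub>E C" by simp
    moreover have "\<Psi> (restrict g P) = a"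
    proof
      fix y
      show "\<Psi> (restrict g P) y = a y"
        using factor block_of_mem(1)[OF P] PiE_arb[OF a, of y] by (cases "y \<in> I") (simp_all add: \<Psi>_def)
    qed
    ultimately show "a \<in> \<Psi> ` {g \<in> P \<rightarrow>\<^sub>E C. inj_on g P}"
      using inj by (intro image_eqI[of _ _ "restrict g P"]) simp_all
  qed
  ultimately show ?thesis by (simp add: bij_betw_def bij_betw_same_card)
qed

lemma card_kernel_partition_eq_prod:
  assumes "finite I" and P: "partition_on I P"
  shows "card {a \<in> I \<rightarrow>\<^sub>E {..<M}. kernel_partition I a = P} = (\<Prod>i=0..<card P. M - i)"
  using card_inj_on_subset_funcset[OF finite_elements[OF assms] finite_lessThan subset_refl, of M]
  by (simp add: card_kernel_partition_eq[OF P])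

lemma count_image_mset_mset_set:
  "finite S \<Longrightarrow> count (image_mset f (mset_set S)) z = card {y\<in>S. f y = z}"
  by (simp add: count_image_mset Int_def conj_commute)

lemma image_mset_pairs_eq_iff_block_counts:
  fixes a :: "'a \<Rightarrow> 'b" and b :: "'a \<Rightarrow> 'c"
  assumes "finite I" and f: "f ` I \<subseteq> I"
  shows "image_mset (\<lambda>y. (a y, b y)) (mset_set I) = image_mset (\<lambda>y. (a y, b (f y))) (mset_set I)
     \<longleftrightarrow> (\<forall>\<beta>\<in>kernel_partition I a. \<forall>\<gamma>\<in>kernel_partition I b.
            card {x. x \<in> \<beta> \<and> x \<in> \<gamma>} = card {x. x \<in> \<beta> \<and> f x \<in> \<gamma>})"
proof -
  define c where "c u v = card {y\<in>I. a y = u \<and> b y = v}" for u v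
  define c' where "c' u v = card {y\<in>I. a y = u \<and> b (f y) = v}" for u v
  have "image_mset (\<lambda>y. (a y, b y)) (mset_set I) = image_mset (\<lambda>y. (a y, b (f y))) (mset_set I)
     \<longleftrightarrow> (\<forall>u v. c u v = c' u v)"
    unfolding multiset_eq_iff count_image_mset_mset_set[OF \<open>finite I\<close>] c_def c'_def by auto
  also have "\<dots> \<longleftrightarrow> (\<forall>y\<in>I. \<forall>z\<in>I. c (a y) (b z) = c' (a y) (b z))"
  proof
    assume on_values: "\<forall>y\<in>I. \<forall>z\<in>I. c (a y) (b z) = c' (a y) (b z)"
    show "\<forall>u v. c u v = c' u v"
    proof (intro allI)
      fix u v
      show "c u v = c' u v"
      proof (cases "u \<in> a ` I \<and> v \<in> b ` I")
        case True
        then show ?thesis using on_values by blast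
      next
        case False
        then have "{y\<in>I. a y = u \<and> b y = v} = {}" "{y\<in>I. a y = u \<and> b (f y) = v} = {}"
          using f by auto
        then show ?thesis by (simp only: c_def c'_def card.empty)
      qed
    qed
  qed simp
  also have "\<dots> \<longleftrightarrow> (\<forall>\<beta>\<in>kernel_partition I a. \<forall>\<gamma>\<in>kernel_partition I b.
            card {x. x \<in> \<beta> \<and> x \<in> \<gamma>} = card {x. x \<in> \<beta> \<and> f x \<in> \<gamma>})"
  proof -
    have "{x. x \<in> {x\<in>I. a x = a y} \<and> x \<in> {x\<in>I. b x = b z}} = {x\<in>I. a x = a y \<and> b x = b z}"
      for y z by blast
    moreover have "{x. x \<in> {x\<in>I. a x = a y} \<and> f x \<in> {x\<in>I. b x = b z}}
        = {x\<in>I. a x = a y \<and> b (f x) = b z}" for y z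
      using f by blast
    ultimately show ?thesis unfolding kernel_partition_def c_def c'_def ball_simps by simp
  qed
  finally show ?thesis .
qed

lemma sum_sum_delta:
  fixes g :: "nat \<Rightarrow> nat \<Rightarrow> 'a::comm_monoid_add"
  shows "(\<Sum>s=1..M. \<Sum>t=1..N. if u = s \<and> v = t then g s t else 0)
       = (if u \<in> {1..M} \<and> v \<in> {1..N} then g u v else 0)"
proof -
  have "(\<Sum>t=1..N. if u = s \<and> v = t then g s t else 0)
      = (if u = s then if v \<in> {1..N} then g s v else 0 else 0)" for s
    by (cases "u = s") (simp_all add: sum.delta')
  then show ?thesis by (simp only: sum.delta' finite_atLeastAtMost) auto
qed

lemma sum_group_by_two_sizes:
  fixes g :: "nat \<Rightarrow> nat \<Rightarrow> 'a::semiring_1"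
  assumes "finite R"
    and pos: "\<And>x. x \<in> R \<Longrightarrow> 0 < u x \<and> 0 < v x"
    and vanish: "\<And>s t. M < s \<or> N < t \<Longrightarrow> g s t = 0"
  shows "(\<Sum>x\<in>R. g (u x) (v x))
       = (\<Sum>s=1..M. \<Sum>t=1..N. of_nat (card {x\<in>R. u x = s \<and> v x = t}) * g s t)"
proof -
  have "(\<Sum>s=1..M. \<Sum>t=1..N. of_nat (card {x\<in>R. u x = s \<and> v x = t}) * g s t)
      = (\<Sum>s=1..M. \<Sum>t=1..N. \<Sum>x\<in>R. if u x = s \<and> v x = t then g s t else 0)"
    using \<open>finite R\<close> by (simp add: sum.If_cases sum_distrib_right Int_def)
  also have "\<dots> = (\<Sum>x\<in>R. \<Sum>s=1..M. \<Sum>t=1..N. if u x = s \<and> v x = t then g s t else 0)"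
    by (subst sum.swap) (subst (2) sum.swap, rule refl)
  also have "\<dots> = (\<Sum>x\<in>R. g (u x) (v x))"
    unfolding sum_sum_delta using pos vanish by (intro sum.cong) (auto simp: Suc_le_eq)
  finally show ?thesis ..
qed

lemma prod_diff_eq_fact_div_fact:
  "s \<le> M \<Longrightarrow> real (\<Prod>i=0..<s. M - i) = fact M / fact (M - s)"
proof (induction s)
  case (Suc s)
  then have "fact (M - s) = real (M - s) * fact (M - Suc s)"
    by (metis Suc_diff_Suc Suc_le_lessD fact_Suc)
  with Suc show ?case by (simp add: field_simps of_nat_diff)
qed simp

lemma prod_diff_eq_0: "M < s \<Longrightarrow> (\<Prod>i=0..<s. M - i) = (0::nat)"
  by (intro prod_zero) (auto intro!: bexI[of _ M])

lemma card_pairs_by_kernel_partitions: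
  assumes "finite I"
  shows "card {(a, b). a \<in> I \<rightarrow>\<^sub>E {..<M} \<and> b \<in> I \<rightarrow>\<^sub>E {..<N} \<and>
                     Q (kernel_partition I a) (kernel_partition I b)}
       = (\<Sum>(\<pi>, \<sigma>) \<in> {(\<pi>, \<sigma>). partition_on I \<pi> \<and> partition_on I \<sigma> \<and> Q \<pi> \<sigma>}.
            (\<Prod>i=0..<card \<pi>. M - i) * (\<Prod>i=0..<card \<sigma>. N - i))"
proof -
  define R where "R = {(\<pi>, \<sigma>). partition_on I \<pi> \<and> partition_on I \<sigma> \<and> Q \<pi> \<sigma>}"
  define F where "F K \<pi> = {a \<in> I \<rightarrow>\<^sub>E {..<K}. kernel_partition I a = \<pi>}" for K :: nat and \<pi>
  have "R \<subseteq> {P. partition_on I P} \<times> {P. partition_on I P}" by (auto simp: R_def)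
  then have "finite R"
    using finitely_many_partition_on[OF assms] by (auto intro: finite_subset)
  have pairs_eq: "{(a, b). a \<in> I \<rightarrow>\<^sub>E {..<M} \<and> b \<in> I \<rightarrow>\<^sub>E {..<N} \<and>
                 Q (kernel_partition I a) (kernel_partition I b)}
      = (\<Union>(\<pi>, \<sigma>)\<in>R. F M \<pi> \<times> F N \<sigma>)"
    by (auto simp: R_def F_def partition_on_kernel_partition)
  have "finite (F K \<pi>)" for K \<pi>
  proof (rule finite_subset)
    show "F K \<pi> \<subseteq> I \<rightarrow>\<^sub>E {..<K}" by (auto simp: F_def)
    show "finite (I \<rightarrow>\<^sub>E {..<K})" using assms by (simp add: finite_PiE)
  qed
  then have "card (\<Union>(\<pi>, \<sigma>)\<in>R. F M \<pi> \<times> F N \<sigma>) = (\<Sum>(\<pi>, \<sigma>)\<in>R. card (F M \<pi> \<times> F N \<sigma>))"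
    using \<open>finite R\<close> by (subst card_UN_disjoint) (auto simp: F_def split_def)
  then have "card {(a, b). a \<in> I \<rightarrow>\<^sub>E {..<M} \<and> b \<in> I \<rightarrow>\<^sub>E {..<N} \<and>
                 Q (kernel_partition I a) (kernel_partition I b)}
      = (\<Sum>(\<pi>, \<sigma>)\<in>R. card (F M \<pi>) * card (F N \<sigma>))"
    unfolding pairs_eq by (simp add: card_cartesian_product split_def)
  also have "\<dots> = (\<Sum>(\<pi>, \<sigma>)\<in>R. (\<Prod>i=0..<card \<pi>. M - i) * (\<Prod>i=0..<card \<sigma>. N - i))"
    using assms by (intro sum.cong) (auto simp: R_def F_def card_kernel_partition_eq_prod)
  finally show ?thesis unfolding R_def .
qed

definition related_partition_pairs :: "nat \<Rightarrow> (nat set set \<times> nat set set) set" where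
  "related_partition_pairs p =
     {(\<pi>, \<sigma>). \<pi> \<in> set_partitions p \<and> \<sigma> \<in> set_partitions p \<and> part_rel p \<pi> \<sigma>}"

lemma card_set_partition_le: "\<pi> \<in> set_partitions p \<Longrightarrow> card \<pi> \<le> p"
  using partition_on_card_le[of "{1..p}" \<pi>] by (simp add: set_partitions_def)

lemma card_set_partition_pos: "0 < p \<Longrightarrow> \<pi> \<in> set_partitions p \<Longrightarrow> 0 < card \<pi>"
  using partition_on_card_pos[of "{1..p}" \<pi>] by (simp add: set_partitions_def)

lemma related_partition_pairs_card_le:
  "(\<pi>, \<sigma>) \<in> related_partition_pairs p \<Longrightarrow> card \<pi> \<le> p \<and> card \<sigma> \<le> p"
  by (simp add: related_partition_pairs_def card_set_partition_le)

lemma finite_related_partition_pairs: "finite (related_partition_pairs p)"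
proof (rule finite_subset)
  show "related_partition_pairs p \<subseteq> set_partitions p \<times> set_partitions p"
    by (auto simp: related_partition_pairs_def)
  show "finite (set_partitions p \<times> set_partitions p)"
    using finitely_many_partition_on[of "{1..p}"] by (simp add: set_partitions_def)
qed

lemma related_partition_pairs_card_pos:
  "0 < p \<Longrightarrow> (\<pi>, \<sigma>) \<in> related_partition_pairs p \<Longrightarrow> 0 < card \<pi> \<and> 0 < card \<sigma>"
  by (simp add: related_partition_pairs_def card_set_partition_pos)

lemma card_delta_tuples:
  assumes "0 < p"
  shows "card {(a, b). a \<in> {1..p} \<rightarrow>\<^sub>E {..<M} \<and> b \<in> {1..p} \<rightarrow>\<^sub>E {..<N} \<and>
                  image_mset (\<lambda>y. (a y, b y)) (mset_set {1..p})
                = image_mset (\<lambda>y. (a y, b (cyc_succ p y))) (mset_set {1..p})}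
       = (\<Sum>s=1..M. \<Sum>t=1..N.
            card {x \<in> related_partition_pairs p. card (fst x) = s \<and> card (snd x) = t}
            * ((\<Prod>i=0..<s. M - i) * (\<Prod>i=0..<t. N - i)))"
proof -
  have "cyc_succ p ` {1..p} \<subseteq> {1..p}"
    using assms by (auto simp: cyc_succ_def Suc_le_eq)
  then have "card {(a, b). a \<in> {1..p} \<rightarrow>\<^sub>E {..<M} \<and> b \<in> {1..p} \<rightarrow>\<^sub>E {..<N} \<and>
                  image_mset (\<lambda>y. (a y, b y)) (mset_set {1..p})
                = image_mset (\<lambda>y. (a y, b (cyc_succ p y))) (mset_set {1..p})}
      = (\<Sum>(\<pi>, \<sigma>)\<in>related_partition_pairs p. (\<Prod>i=0..<card \<pi>. M - i) * (\<Prod>i=0..<card \<sigma>. N - i))"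
    by (simp add: image_mset_pairs_eq_iff_block_counts part_rel_def[symmetric]
        card_pairs_by_kernel_partitions related_partition_pairs_def set_partitions_def)
  also have "\<dots> = (\<Sum>s=1..M. \<Sum>t=1..N.
            card {x \<in> related_partition_pairs p. card (fst x) = s \<and> card (snd x) = t}
            * ((\<Prod>i=0..<s. M - i) * (\<Prod>i=0..<t. N - i)))"
  proof -
    have pos: "0 < card (fst x) \<and> 0 < card (snd x)" if "x \<in> related_partition_pairs p" for x
      using that related_partition_pairs_card_pos[OF assms] by (cases x) simp
    have vanish: "(\<Prod>i=0..<s. M - i) * (\<Prod>i=0..<t. N - i) = 0" if "M < s \<or> N < t" for s t
      using that prod_diff_eq_0 by auto
    show ?thesis
      using sum_group_by_two_sizes[OF finite_related_partition_pairs pos vanish]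
      by (simp only: split_def of_nat_id)
  qed
  finally show ?thesis .
qed

lemma delta_st_eq:
  assumes s: "s \<in> {1..M}" and t: "t \<in> {1..N}"
  shows "delta_st p M N s t
       = real ((\<Prod>i=0..<s. M - i) * (\<Prod>i=0..<t. N - i)
            * card {x \<in> related_partition_pairs p. card (fst x) = s \<and> card (snd x) = t})
         / (real M * real N) ^ p"
proof -
  define C where "C = {x \<in> related_partition_pairs p. card (fst x) = s \<and> card (snd x) = t}"
  show ?thesis
  proof (cases "s \<le> p \<and> t \<le> p")
    case True
    have "finite (set_partitions p)"
      using finitely_many_partition_on[of "{1..p}"] by (simp add: set_partitions_def)
    moreover have "C \<subseteq> {\<pi> \<in> set_partitions p. card \<pi> = s} \<times> {\<sigma> \<in> set_partitions p. card \<sigma> = t}"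
      by (auto simp: C_def related_partition_pairs_def)
    ultimately have "card C \<le> S_count p s * S_count p t"
      unfolding S_count_def card_cartesian_product[symmetric] by (intro card_mono) simp_all
    \<comment> \<open>\<open>eps p s t\<close> divides by zero when no partition has \<open>s\<close> or \<open>t\<close> blocks; then \<open>C\<close> is empty too\<close>
    then have C_empty: "card C = 0" if "S_count p s = 0 \<or> S_count p t = 0"
      using that by auto
    have "{(\<pi>, \<sigma>). \<pi> \<in> set_partitions p \<and> \<sigma> \<in> set_partitions p \<and> part_rel p \<pi> \<sigma>
             \<and> card \<pi> = s \<and> card \<sigma> = t} = C"
      by (auto simp: C_def related_partition_pairs_def)
    then have "eps p s t = real (card C) / (real (S_count p s) * real (S_count p t))"
      unfolding eps_def by simp
    moreover have "fact M / fact (M - s) = real (\<Prod>i=0..<s. M - i)"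
      "fact N / fact (N - t) = real (\<Prod>i=0..<t. N - i)"
      using s t prod_diff_eq_fact_div_fact by simp_all
    ultimately have "delta_st p M N s t = real (\<Prod>i=0..<s. M - i) * (real (S_count p s) / real M ^ p)
        * real (\<Prod>i=0..<t. N - i) * (real (S_count p t) / real N ^ p)
        * (real (card C) / (real (S_count p s) * real (S_count p t)))"
      using True s t by (simp add: delta_st_def)
    also have "\<dots> = real ((\<Prod>i=0..<s. M - i) * (\<Prod>i=0..<t. N - i) * card C) / (real M * real N) ^ p"
      using C_empty s t by (simp add: field_simps power_mult_distrib)
    finally show ?thesis unfolding C_def .
  next
    case False
    have "C = {}"
      using False related_partition_pairs_card_le by (force simp: C_def)
    then show ?thesis
      using False by (auto simp: delta_st_def C_def[symmetric])
  qed
qed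

theorem proposition7p3:
  fixes M N p :: nat
  assumes "M \<ge> 1" and "N \<ge> 1" and "p \<ge> 1"
  shows "delta p M N = (\<Sum>s=1..M. \<Sum>t=1..N. delta_st p M N s t)"
proof -
  have "p > 0" using assms by simp
  have "delta p M N * (real M * real N) ^ p
      = real (\<Sum>s=1..M. \<Sum>t=1..N.
          card {x \<in> related_partition_pairs p. card (fst x) = s \<and> card (snd x) = t}
          * ((\<Prod>i=0..<s. M - i) * (\<Prod>i=0..<t. N - i)))"
    using assms unfolding delta_def card_delta_tuples[OF \<open>p > 0\<close>] by simp
  also have "\<dots> = (\<Sum>s=1..M. \<Sum>t=1..N. delta_st p M N s t * (real M * real N) ^ p)"
    using assms by (simp add: delta_st_eq mult_ac)
  also have "\<dots> = (\<Sum>s=1..M. \<Sum>t=1..N. delta_st p M N s t) * (real M * real N) ^ p"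
    by (simp add: sum_distrib_right)
  finally show ?thesis
    using assms by simp
qed

end
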